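(* Let $b_1,\dots,b_n\in\textsc{Gs}$ be valuations over $m$ items. Then for any partition $\mathbf{x}_1,\dots,\mathbf{x}_n\in\{0,1\}^m$ of the items (i.e. $\sum_i\mathbf{x}_i=\mathbf{1}$), $$\sum_i W^{\mathbf{b}_{-i}}(\mathbf{x}_i\mid\mathbf{1}-\mathbf{x}_i)\le W^{\mathbf{b}}(\mathbf{1}).$$
   Context: A valuation is $v:\{0,1\}^m\to\mathbb{R}_+$ with $v(\mathbf{0})=0$ and monotone; it is extended to $\mathbb{Z}^m_+$ by $v(\mathbf{x})=v(\min(\mathbf{x},\mathbf{1}))$. Demand: $D_v(\mathbf{p})=\arg\max_{\mathbf{x}\in\{0,1\}^m}[v(\mathbf{x})-\mathbf{p}\cdot\mathbf{x}]$. $v\in\textsc{Gs}$ if for all prices $\mathbf{p}\le\mathbf{q}$ in $\mathbb{R}^m$, with $S=\{j:p_j=q_j\}$, and all $\mathbf{x}\in D_v(\mathbf{p})$, there is $\mathbf{y}\in D_v(\mathbf{q})$ with $y_j\ge x_j$ for all $j\in S$. For $\mathbf{x}\in\mathbb{Z}^m_+$: $W^{\mathbf{b}}(\mathbf{x})=\max\{\sum_k b_k(\mathbf{y}_k):\sum_k\mathbf{y}_k\le\mathbf{x},\mathbf{y}_k\in\{0,1\}^m\}$ and $W^{\mathbf{b}_{-i}}(\mathbf{x})=\max\{\sum_{k\ne i}b_k(\mathbf{y}_k):\sum_{k\ne i}\mathbf{y}_k\le\mathbf{x},\mathbf{y}_k\in\{0,1\}^m\}$. For a function $f$ on $\mathbb{Z}^m_+$,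 $f(\mathbf{y}\mid\mathbf{x})=f(\mathbf{y}+\mathbf{x})-f(\mathbf{x})$. *)

theory Defs
  imports Complex_Main
begin

(* Items form a finite type 'm (m = CARD('m)); vectors in Z^m_+ are functions 'm => nat,
   vectors in {0,1}^m are those with all entries <= 1. *)

definition binary :: "('m \<Rightarrow> nat) \<Rightarrow> bool" where
  "binary x \<longleftrightarrow> (\<forall>j. x j \<le> 1)"

definition one_vec :: "'m \<Rightarrow> nat" where
  "one_vec = (\<lambda>_. 1)"

definition valuation :: "(('m::finite \<Rightarrow> nat) \<Rightarrow> real) \<Rightarrow> bool" where
  "valuation v \<longleftrightarrow>
     v (\<lambda>_. 0) = 0 \<and>
     (\<forall>x. binary x \<longrightarrow> v x \<ge> 0) \<and>
     (\<forall>x y. binary x \<and> binary y \<and> x \<le> y \<longrightarrow> v x \<le> v y) \<and>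
     (\<forall>x. v x = v (\<lambda>j. min (x j) 1))"

definition demand :: "(('m::finite \<Rightarrow> nat) \<Rightarrow> real) \<Rightarrow> ('m \<Rightarrow> real) \<Rightarrow> ('m \<Rightarrow> nat) set" where
  "demand v p = {x. binary x \<and>
      (\<forall>z. binary z \<longrightarrow> v z - (\<Sum>j\<in>UNIV. p j * real (z j)) \<le> v x - (\<Sum>j\<in>UNIV. p j * real (x j)))}"

definition gross_substitutes :: "(('m::finite \<Rightarrow> nat) \<Rightarrow> real) \<Rightarrow> bool" where
  "gross_substitutes v \<longleftrightarrow>
     (\<forall>p q. p \<le> q \<longrightarrow> (\<forall>x\<in>demand v p. \<exists>y\<in>demand v q.
        \<forall>j\<in>{j. p j = q j}. y j \<ge> x j))"

(* W^b(x) = welfare b {..<n} x;  W^{b_{-i}}(x) = welfare b ({..<n} - {i}) x. *)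
definition welfare :: "(nat \<Rightarrow> ('m::finite \<Rightarrow> nat) \<Rightarrow> real) \<Rightarrow> nat set \<Rightarrow> ('m \<Rightarrow> nat) \<Rightarrow> real" where
  "welfare b K x = Max {(\<Sum>k\<in>K. b k (y k)) | y.
       (\<forall>k\<in>K. binary (y k)) \<and> (\<forall>j. (\<Sum>k\<in>K. y k j) \<le> x j)}"

definition marginal :: "(('m \<Rightarrow> nat) \<Rightarrow> real) \<Rightarrow> ('m \<Rightarrow> nat) \<Rightarrow> ('m \<Rightarrow> nat) \<Rightarrow> real" where
  "marginal f y x = f (\<lambda>j. y j + x j) - f x"

end

theory Submission
  imports Defs
begin

text \<open>For gross substitutes bidders the optimal welfare \<open>W\<^sub>K\<close> is submodular on \<open>{0,1}\<^sup>m\<close>.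
  By LP duality \<open>W\<^sub>K(s)\<close> is the minimum over prices \<open>p \<ge> 0\<close> of \<open>\<Sum>\<^sub>k U\<^sub>k(p) + p\<cdot>s\<close>,
  where the indirect utilities \<open>U\<^sub>k\<close> are submodular in \<open>p\<close> precisely because of gross
  substitutes; combining dual prices \<open>p\<close> for \<open>s\<close> and \<open>q\<close> for \<open>t\<close> through \<open>min p q\<close> and
  \<open>max p q\<close> gives \<open>W(s \<squnion> t) + W(s \<sqinter> t) \<le> W(s) + W(t)\<close>.

  Submodularity implies that adding a bidder can only raise marginal values, so
  \<open>W\<^sub>-\<^sub>i(x\<^sub>i | 1 - x\<^sub>i) \<le> W(1) - W(1 - x\<^sub>i) \<le> W(x\<^sub>1 + \<dots> + x\<^sub>i) - W(x\<^sub>1 + \<dots> + x\<^sub>i\<^sub>-\<^sub>1)\<close>,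
  and the right-hand sides telescope to \<open>W(1) - W(0) \<le> W(1)\<close>.\<close>

lemma binary_01: "binary x \<Longrightarrow> x j = 0 \<or> x j = 1"
  by (auto simp: binary_def le_Suc_eq)

lemma finite_binary: "finite {x :: 'm::finite \<Rightarrow> nat. binary x}"
proof (rule finite_subset)
  show "{x. binary x} \<subseteq> {x :: 'm \<Rightarrow> nat. \<forall>j. (j \<in> UNIV \<longrightarrow> x j \<in> {0, 1::nat}) \<and> (j \<notin> UNIV \<longrightarrow> x j = 0)}"
    by (auto simp: binary_def le_Suc_eq)
qed (rule finite_set_of_finite_funs; simp)

lemma binary_one_vec [simp]: "binary one_vec"
  by (simp add: binary_def one_vec_def)

lemma binary_zero [simp]: "binary (\<lambda>_. 0)"
  by (simp add: binary_def)

lemma valuation_zero: "valuation v \<Longrightarrow> v (\<lambda>_. 0) = 0"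
  unfolding valuation_def by blast

lemma valuation_nonneg: "valuation v \<Longrightarrow> binary x \<Longrightarrow> 0 \<le> v x"
  unfolding valuation_def by blast

lemma valuation_le_one:
  assumes "valuation v" "binary z"
  shows "v z \<le> v one_vec"
proof -
  have "z \<le> one_vec" using assms(2) by (simp add: binary_def le_fun_def one_vec_def)
  then show ?thesis using assms binary_one_vec unfolding valuation_def by blast
qed

section \<open>Optimal welfare\<close>

lemma finite_welfare_values:
  fixes b :: "nat \<Rightarrow> ('m::finite \<Rightarrow> nat) \<Rightarrow> real" and x :: "'m \<Rightarrow> nat"
  assumes "finite K"
  shows "finite {(\<Sum>k\<in>K. b k (y k)) | y.
           (\<forall>k\<in>K. binary (y k)) \<and> (\<forall>j. (\<Sum>k\<in>K. y k j) \<le> x j)}"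
proof (rule finite_subset)
  let ?Y = "{y :: nat \<Rightarrow> 'm \<Rightarrow> nat. \<forall>k. (k \<in> K \<longrightarrow> y k \<in> {z. binary z}) \<and> (k \<notin> K \<longrightarrow> y k = (\<lambda>_. 0))}"
  show "finite ((\<lambda>y. \<Sum>k\<in>K. b k (y k)) ` ?Y)"
    by (rule finite_imageI, rule finite_set_of_finite_funs[OF assms finite_binary])
  show "{(\<Sum>k\<in>K. b k (y k)) | y.
           (\<forall>k\<in>K. binary (y k)) \<and> (\<forall>j. (\<Sum>k\<in>K. y k j) \<le> x j)}
        \<subseteq> (\<lambda>y. \<Sum>k\<in>K. b k (y k)) ` ?Y"
  proof
    fix w assume "w \<in> {(\<Sum>k\<in>K. b k (y k)) | y.
           (\<forall>k\<in>K. binary (y k)) \<and> (\<forall>j. (\<Sum>k\<in>K. y k j) \<le> x j)}"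
    then obtain y where w: "w = (\<Sum>k\<in>K. b k (y k))" and y: "\<forall>k\<in>K. binary (y k)"
      by blast
    have "(\<lambda>k. if k \<in> K then y k else (\<lambda>_. 0)) \<in> ?Y" using y by auto
    moreover have "w = (\<lambda>y. \<Sum>k\<in>K. b k (y k)) (\<lambda>k. if k \<in> K then y k else (\<lambda>_. 0))"
      using w by simp
    ultimately show "w \<in> (\<lambda>y. \<Sum>k\<in>K. b k (y k)) ` ?Y" by (intro rev_image_eqI)
  qed
qed

lemma welfare_ge:
  assumes "finite K" "\<forall>k\<in>K. binary (y k)" "\<forall>j. (\<Sum>k\<in>K. y k j) \<le> x j"
  shows "(\<Sum>k\<in>K. b k (y k)) \<le> welfare b K x"
  unfolding welfare_def
  by (rule Max_ge[OF finite_welfare_values[OF assms(1)]]) (use assms in blast)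

lemma welfare_attained:
  assumes "finite K"
  obtains y where "\<forall>k\<in>K. binary (y k)" "\<forall>j. (\<Sum>k\<in>K. y k j) \<le> x j"
    "welfare b K x = (\<Sum>k\<in>K. b k (y k))"
proof -
  let ?A = "{(\<Sum>k\<in>K. b k (y k)) | y.
       (\<forall>k\<in>K. binary (y k)) \<and> (\<forall>j. (\<Sum>k\<in>K. y k j) \<le> x j)}"
  have "(\<Sum>k\<in>K. b k ((\<lambda>_ _. 0) k)) \<in> ?A" by auto
  then have "Max ?A \<in> ?A"
    using finite_welfare_values[OF assms] by (intro Max_in) auto
  then show ?thesis using that unfolding welfare_def by blast
qed

lemma welfare_nonneg:
  assumes "finite K" "\<forall>k\<in>K. valuation (b k)"
  shows "0 \<le> welfare b K x"
proof -
  have "(\<Sum>k\<in>K. b k ((\<lambda>_ _. 0) k)) \<le> welfare b K x"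
    using assms(1) by (rule welfare_ge) auto
  moreover have "(\<Sum>k\<in>K. b k ((\<lambda>_ _. 0) k)) = 0"
    using assms(2) by (simp add: valuation_zero)
  ultimately show ?thesis by simp
qed

section \<open>Indirect utility of a gross substitutes valuation\<close>

definition cost :: "('m::finite \<Rightarrow> real) \<Rightarrow> ('m \<Rightarrow> nat) \<Rightarrow> real" where
  "cost p z = (\<Sum>j\<in>UNIV. p j * real (z j))"

definition utility :: "(('m::finite \<Rightarrow> nat) \<Rightarrow> real) \<Rightarrow> ('m \<Rightarrow> real) \<Rightarrow> ('m \<Rightarrow> nat) \<Rightarrow> real" where
  "utility v p z = v z - cost p z"

definition indirect_utility :: "(('m::finite \<Rightarrow> nat) \<Rightarrow> real) \<Rightarrow> ('m \<Rightarrow> real) \<Rightarrow> real" where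
  "indirect_utility v p = Max (utility v p ` {z. binary z})"

lemma indirect_utility_ge: "binary z \<Longrightarrow> utility v p z \<le> indirect_utility v p"
  unfolding indirect_utility_def by (rule Max_ge) (auto intro: finite_binary)

lemma indirect_utility_attained:
  obtains z where "binary z" "indirect_utility v p = utility v p z"
proof -
  have "indirect_utility v p \<in> utility v p ` {z. binary z}"
    unfolding indirect_utility_def
  proof (rule Max_in)
    show "finite (utility v p ` {z. binary z})" by (intro finite_imageI finite_binary)
    show "utility v p ` {z. binary z} \<noteq> {}" using binary_zero by blast
  qed
  then show ?thesis using that by blast
qed

lemma demand_iff:
  "x \<in> demand v p \<longleftrightarrow> binary x \<and> (\<forall>z. binary z \<longrightarrow> utility v p z \<le> utility v p x)"
  by (simp add: demand_def utility_def cost_def)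

lemma demand_utility:
  assumes "x \<in> demand v p"
  shows "utility v p x = indirect_utility v p"
proof (rule antisym)
  show "utility v p x \<le> indirect_utility v p"
    using assms by (simp add: demand_iff indirect_utility_ge)
  obtain z where "binary z" "indirect_utility v p = utility v p z"
    by (rule indirect_utility_attained)
  then show "indirect_utility v p \<le> utility v p x"
    using assms by (simp add: demand_iff)
qed

lemma demand_nonempty: obtains x where "x \<in> demand v p"
proof -
  obtain z where "binary z" "indirect_utility v p = utility v p z"
    by (rule indirect_utility_attained)
  then have "z \<in> demand v p"
    using indirect_utility_ge[of _ v p] by (simp add: demand_iff)
  then show ?thesis by (rule that)
qed

lemma cost_split: "cost p z = cost (p(i := 0)) z + p i * real (z i)"
proof -
  have "cost p z = p i * real (z i) + (\<Sum>j\<in>UNIV - {i}. p j * real (z j))"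
    unfolding cost_def by (simp add: sum.remove)
  moreover have "cost (p(i := 0)) z = (\<Sum>j\<in>UNIV - {i}. p j * real (z j))"
    unfolding cost_def by (simp add: sum.remove[of UNIV i])
  ultimately show ?thesis by simp
qed

text \<open>Splitting the bundles according to whether they contain item \<open>i\<close> exhibits the indirect
  utility as a function of \<open>p i\<close> alone: a maximum of a decreasing line and a constant.\<close>

definition best_with :: "(('m::finite \<Rightarrow> nat) \<Rightarrow> real) \<Rightarrow> 'm \<Rightarrow> ('m \<Rightarrow> real) \<Rightarrow> real" where
  "best_with v i p = Max (utility v (p(i := 0)) ` {z. binary z \<and> z i = 1})"

definition best_without :: "(('m::finite \<Rightarrow> nat) \<Rightarrow> real) \<Rightarrow> 'm \<Rightarrow> ('m \<Rightarrow> real) \<Rightarrow> real" where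
  "best_without v i p = Max (utility v (p(i := 0)) ` {z. binary z \<and> z i = 0})"

lemma best_with_upd [simp]: "best_with v i (p(i := c)) = best_with v i p"
  by (simp add: best_with_def)

lemma best_without_upd [simp]: "best_without v i (p(i := c)) = best_without v i p"
  by (simp add: best_without_def)

lemma finite_binary_restrict: "finite {z :: 'm::finite \<Rightarrow> nat. binary z \<and> P z}"
  by (rule finite_subset[OF _ finite_binary]) blast

lemma best_with_ge: "binary z \<Longrightarrow> z i = 1 \<Longrightarrow> utility v (p(i := 0)) z \<le> best_with v i p"
  unfolding best_with_def by (rule Max_ge) (auto intro: finite_binary_restrict)

lemma best_without_ge: "binary z \<Longrightarrow> z i = 0 \<Longrightarrow> utility v (p(i := 0)) z \<le> best_without v i p"
  unfolding best_without_def by (rule Max_ge) (auto intro: finite_binary_restrict)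

lemma indirect_utility_split:
  "indirect_utility v p = max (best_with v i p - p i) (best_without v i p)"
proof -
  let ?Z1 = "{z. binary z \<and> z i = 1}" and ?Z0 = "{z. binary z \<and> z i = 0}"
  have ne1: "?Z1 \<noteq> {}" using binary_one_vec by (auto simp: one_vec_def)
  have ne0: "?Z0 \<noteq> {}" using binary_zero by blast
  have Z: "{z. binary z} = ?Z1 \<union> ?Z0" by (blast dest: binary_01)
  have U1: "utility v p ` ?Z1 = (\<lambda>u. u - p i) ` utility v (p(i := 0)) ` ?Z1"
    unfolding image_image by (rule image_cong) (auto simp: utility_def cost_split[of p _ i])
  have U0: "utility v p ` ?Z0 = utility v (p(i := 0)) ` ?Z0"
    by (rule image_cong) (auto simp: utility_def cost_split[of p _ i])
  have "indirect_utility v p = max (Max (utility v p ` ?Z1)) (Max (utility v p ` ?Z0))"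
    unfolding indirect_utility_def Z image_Un
    using ne1 ne0 by (intro Max_Un) (auto intro: finite_binary_restrict)
  also have "Max (utility v p ` ?Z1) = best_with v i p - p i"
    unfolding U1 best_with_def using ne1
    by (intro mono_Max_commute[symmetric]) (auto intro: finite_binary_restrict monoI)
  also have "Max (utility v p ` ?Z0) = best_without v i p"
    unfolding U0 best_without_def ..
  finally show ?thesis .
qed

text \<open>The difference \<open>best_with v i p - best_without v i p\<close> is the price at which item \<open>i\<close>
  drops out of demand. Gross substitutes says it can only go up when other prices rise: at the
  midpoint price of a violation, \<open>i\<close> would be demanded at \<open>p\<close> but in no demanded bundle at \<open>q\<close>.\<close>

lemma threshold_mono:
  assumes gs: "gross_substitutes v" and pq: "p \<le> q" and eq: "p i = q i"
  shows "best_with v i p - best_without v i p \<le> best_with v i q - best_without v i q"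
proof (rule ccontr)
  assume contra: "\<not> ?thesis"
  define c where
    "c = (best_with v i q - best_without v i q + (best_with v i p - best_without v i p)) / 2"
  have above: "best_without v i p < best_with v i p - c"
    and below: "best_with v i q - c < best_without v i q"
    using contra by (simp_all add: c_def field_simps)
  obtain x where x: "x \<in> demand v (p(i := c))" by (rule demand_nonempty)
  have xb: "binary x" using x by (simp add: demand_iff)
  have "x i = 1"
  proof (rule ccontr)
    assume "x i \<noteq> 1"
    then have "x i = 0" using binary_01[OF xb] by blast
    then have "utility v (p(i := c)) x \<le> best_without v i p"
      using best_without_ge[OF xb, of i v p]
      by (simp add: utility_def cost_split[of "p(i := c)" x i])
    moreover have "utility v (p(i := c)) x = max (best_with v i p - c) (best_without v i p)"
      using demand_utility[OF x] indirect_utility_split[of v "p(i := c)" i] by simp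
    ultimately show False using above by simp
  qed
  have "p(i := c) \<le> q(i := c)" using pq by (simp add: le_fun_def)
  then obtain y where y: "y \<in> demand v (q(i := c))"
    and ge: "\<forall>j\<in>{j. (p(i := c)) j = (q(i := c)) j}. x j \<le> y j"
    using gs x unfolding gross_substitutes_def by blast
  have yb: "binary y" using y by (simp add: demand_iff)
  have "x i \<le> y i" using ge by simp
  then have "y i = 1" using \<open>x i = 1\<close> binary_01[OF yb, of i] by auto
  then have "utility v (q(i := c)) y \<le> best_with v i q - c"
    using best_with_ge[OF yb, of i v q]
    by (simp add: utility_def cost_split[of "q(i := c)" y i])
  moreover have "utility v (q(i := c)) y = max (best_with v i q - c) (best_without v i q)"
    using demand_utility[OF y] indirect_utility_split[of v "q(i := c)" i] by simp
  ultimately show False using below by simp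
qed

lemma indirect_utility_increment_antimono:
  assumes gs: "gross_substitutes v" and pq: "p \<le> q" and eq: "p i = q i" and "0 \<le> t"
  shows "indirect_utility v (q(i := q i + t)) - indirect_utility v q
           \<le> indirect_utility v (p(i := p i + t)) - indirect_utility v p"
  using threshold_mono[OF gs pq eq] eq \<open>0 \<le> t\<close>
    indirect_utility_split[of v q i] indirect_utility_split[of v p i]
    indirect_utility_split[of v "q(i := q i + t)" i]
    indirect_utility_split[of v "p(i := p i + t)" i]
  by (simp add: max_def)

lemma indirect_utility_increase_antimono:
  assumes gs: "gross_substitutes v" and "finite A" and pq: "p \<le> q"
    and "\<forall>j\<in>A. p j = q j" and "\<forall>j. 0 \<le> a j" and "\<forall>j. j \<notin> A \<longrightarrow> a j = 0"
  shows "indirect_utility v (\<lambda>j. q j + a j) - indirect_utility v q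
           \<le> indirect_utility v (\<lambda>j. p j + a j) - indirect_utility v p"
  using assms(2,4-)
proof (induction A arbitrary: a rule: finite_induct)
  case empty
  then have "(\<lambda>j. q j + a j) = q" "(\<lambda>j. p j + a j) = p" by auto
  then show ?case by simp
next
  case (insert i A)
  let ?a = "a(i := 0)"
  let ?P = "\<lambda>j. p j + ?a j" and ?Q = "\<lambda>j. q j + ?a j"
  have IH: "indirect_utility v ?Q - indirect_utility v q
      \<le> indirect_utility v ?P - indirect_utility v p"
    using insert by (intro insert.IH) auto
  have "?P \<le> ?Q" using pq by (simp add: le_fun_def)
  moreover have "?P i = ?Q i" using insert by simp
  ultimately have step: "indirect_utility v (?Q(i := ?Q i + a i)) - indirect_utility v ?Q
      \<le> indirect_utility v (?P(i := ?P i + a i)) - indirect_utility v ?P"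
    using insert by (intro indirect_utility_increment_antimono[OF gs]) auto
  have "?Q(i := ?Q i + a i) = (\<lambda>j. q j + a j)" "?P(i := ?P i + a i) = (\<lambda>j. p j + a j)"
    by auto
  then show ?case using IH step by simp
qed

lemma indirect_utility_submodular:
  assumes "gross_substitutes v"
  shows "indirect_utility v (\<lambda>j. min (p j) (q j)) + indirect_utility v (\<lambda>j. max (p j) (q j))
           \<le> indirect_utility v p + indirect_utility v q"
proof -
  let ?a = "\<lambda>j. max (p j - q j) 0"
  have "indirect_utility v (\<lambda>j. q j + ?a j) - indirect_utility v q
      \<le> indirect_utility v (\<lambda>j. min (p j) (q j) + ?a j) - indirect_utility v (\<lambda>j. min (p j) (q j))"
    by (rule indirect_utility_increase_antimono[OF assms, of "{j. q j < p j}"])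
      (auto simp: le_fun_def)
  moreover have "(\<lambda>j. q j + ?a j) = (\<lambda>j. max (p j) (q j))" "(\<lambda>j. min (p j) (q j) + ?a j) = p"
    by (auto simp: max_def min_def)
  ultimately show ?thesis by simp
qed

section \<open>Approximate LP duality for welfare\<close>

lemma cost_sum: "(\<Sum>k\<in>K. cost p (y k)) = cost p (\<lambda>j. \<Sum>k\<in>K. y k j)"
  unfolding cost_def by (subst sum.swap) (simp add: sum_distrib_left)

lemma cost_mono: "\<forall>j. 0 \<le> p j \<Longrightarrow> \<forall>j. y j \<le> x j \<Longrightarrow> cost p y \<le> cost p x"
  unfolding cost_def by (intro sum_mono mult_left_mono) auto

lemma welfare_le_dual:
  assumes "finite K" and "\<forall>j. 0 \<le> p j"
  shows "welfare b K s \<le> (\<Sum>k\<in>K. indirect_utility (b k) p) + cost p s"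
proof -
  obtain y where y: "\<forall>k\<in>K. binary (y k)" "\<forall>j. (\<Sum>k\<in>K. y k j) \<le> s j"
    and opt: "welfare b K s = (\<Sum>k\<in>K. b k (y k))"
    using welfare_attained[OF assms(1)] .
  have "welfare b K s = (\<Sum>k\<in>K. utility (b k) p (y k)) + cost p (\<lambda>j. \<Sum>k\<in>K. y k j)"
    unfolding opt by (simp add: utility_def sum_subtractf cost_sum)
  also have "\<dots> \<le> (\<Sum>k\<in>K. indirect_utility (b k) p) + cost p s"
    using y assms(2) by (intro add_mono sum_mono indirect_utility_ge cost_mono) auto
  finally show ?thesis .
qed

lemma cost_min_max_le:
  assumes "\<forall>j. 0 \<le> p j" "\<forall>j. 0 \<le> q j" "binary s" "binary t"
  shows "cost (\<lambda>j. min (p j) (q j)) (\<lambda>j. max (s j) (t j))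
           + cost (\<lambda>j. max (p j) (q j)) (\<lambda>j. min (s j) (t j)) \<le> cost p s + cost q t"
  unfolding cost_def sum.distrib[symmetric]
proof (rule sum_mono)
  fix j
  show "min (p j) (q j) * real (max (s j) (t j)) + max (p j) (q j) * real (min (s j) (t j))
          \<le> p j * real (s j) + q j * real (t j)"
    using binary_01[OF assms(3), of j] binary_01[OF assms(4), of j] assms(1,2)
    by (elim disjE) (simp_all add: min_def max_def)
qed

lemma demand_excludes_expensive:
  assumes v: "valuation v" and bounded: "\<forall>z. binary z \<longrightarrow> v z \<le> V"
    and x: "x \<in> demand v p" and expensive: "V < p j"
  shows "x j = 0"
proof (rule ccontr)
  assume "x j \<noteq> 0"
  have xb: "binary x" using x by (simp add: demand_iff)
  with \<open>x j \<noteq> 0\<close> have "x j = 1" using binary_01[OF xb, of j] by simp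
  have zb: "binary (x(j := 0))" using xb by (simp add: binary_def)
  have "cost p (x(j := 0)) = cost (p(j := 0)) x"
    unfolding cost_def by (rule sum.cong) auto
  moreover have "cost p x = cost (p(j := 0)) x + p j"
    using cost_split[of p x j] \<open>x j = 1\<close> by simp
  moreover have "0 \<le> v (x(j := 0))" "v x \<le> V"
    using valuation_nonneg[OF v zb] bounded xb by simp_all
  moreover have "utility v p (x(j := 0)) \<le> utility v p x"
    using x zb by (simp add: demand_iff)
  ultimately show False using expensive by (simp add: utility_def)
qed

text \<open>The approximately optimal prices come from an ascending auction with bid increment \<open>e\<close>.
  Every item has at most one holder; bidder \<open>k\<close> pays the current price for the items it holds
  and must outbid the current price by \<open>e\<close> on any other item. Items outside the supply \<open>s\<close>
  start at the reserve price \<open>V\<close>, which no bidder will pay.\<close>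

definition assigned :: "('m \<Rightarrow> nat option) \<Rightarrow> nat \<Rightarrow> 'm \<Rightarrow> nat" where
  "assigned own k = (\<lambda>j. if own j = Some k then 1 else 0)"

definition personal_prices :: "real \<Rightarrow> ('m \<Rightarrow> real) \<Rightarrow> ('m \<Rightarrow> nat option) \<Rightarrow> nat \<Rightarrow> 'm \<Rightarrow> real" where
  "personal_prices e p own k = (\<lambda>j. if own j = Some k then p j else p j + e)"

definition reserve_prices :: "('m \<Rightarrow> nat) \<Rightarrow> real \<Rightarrow> 'm \<Rightarrow> real" where
  "reserve_prices s V = (\<lambda>j. if s j = 1 then 0 else V)"

definition outbid :: "('m \<Rightarrow> nat option) \<Rightarrow> nat \<Rightarrow> ('m \<Rightarrow> nat) \<Rightarrow> 'm \<Rightarrow> nat option" where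
  "outbid own k D = (\<lambda>j. if D j = 1 then Some k else own j)"

definition raise_prices ::
    "real \<Rightarrow> ('m \<Rightarrow> real) \<Rightarrow> ('m \<Rightarrow> nat option) \<Rightarrow> nat \<Rightarrow> ('m \<Rightarrow> nat) \<Rightarrow> 'm \<Rightarrow> real" where
  "raise_prices e p own k D = (\<lambda>j. if D j = 1 \<and> own j \<noteq> Some k then p j + e else p j)"

lemma binary_assigned [simp]: "binary (assigned own k)"
  by (simp add: assigned_def binary_def)

lemma sum_assigned:
  assumes "finite K" "\<forall>j k. own j = Some k \<longrightarrow> k \<in> K"
  shows "(\<Sum>k\<in>K. assigned own k j) = (if own j = None then 0 else 1)"
  using assms by (cases "own j") (simp_all add: assigned_def sum.delta')

lemma cost_personal_prices_le:
  fixes z :: "'m::finite \<Rightarrow> nat"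
  assumes "binary z" "0 \<le> e"
  shows "cost (personal_prices e p own k) z \<le> cost p z + real (card (UNIV :: 'm set)) * e"
proof -
  have "cost (personal_prices e p own k) z - cost p z
      = (\<Sum>j\<in>UNIV. (personal_prices e p own k j - p j) * real (z j))"
    by (simp add: cost_def sum_subtractf left_diff_distrib)
  also have "\<dots> \<le> (\<Sum>j\<in>(UNIV :: 'm set). e)"
  proof (rule sum_mono)
    fix j
    show "(personal_prices e p own k j - p j) * real (z j) \<le> e"
      using binary_01[OF assms(1), of j] assms(2) by (auto simp: personal_prices_def)
  qed
  finally show ?thesis by simp
qed

lemma cost_personal_prices_assigned:
  "cost (personal_prices e p own k) (assigned own k) = cost p (assigned own k)"
  unfolding cost_def by (rule sum.cong) (auto simp: personal_prices_def assigned_def)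

locale ascending_auction =
  fixes b :: "nat \<Rightarrow> ('m::finite \<Rightarrow> nat) \<Rightarrow> real" and K :: "nat set"
    and s :: "'m \<Rightarrow> nat" and V e :: real
  assumes valuation: "k \<in> K \<Longrightarrow> valuation (b k)"
    and gross_substitutes: "k \<in> K \<Longrightarrow> gross_substitutes (b k)"
    and bounded: "k \<in> K \<Longrightarrow> binary z \<Longrightarrow> b k z \<le> V"
    and V_nonneg: "0 \<le> V" and e_pos: "0 < e"
begin

definition invariant :: "('m \<Rightarrow> real) \<Rightarrow> ('m \<Rightarrow> nat option) \<Rightarrow> bool" where
  "invariant p own \<longleftrightarrow>
    (\<forall>j k. own j = Some k \<longrightarrow> k \<in> K \<and> s j = 1) \<and>
    (\<forall>j. own j = None \<longrightarrow> p j = reserve_prices s V j) \<and>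
    (\<forall>j. 0 \<le> p j \<and> p j \<le> V) \<and>
    (\<forall>k\<in>K. \<exists>D\<in>demand (b k) (personal_prices e p own k). assigned own k \<le> D)"

definition terminated :: "('m \<Rightarrow> real) \<Rightarrow> ('m \<Rightarrow> nat option) \<Rightarrow> bool" where
  "terminated p own \<longleftrightarrow> (\<forall>k\<in>K. assigned own k \<in> demand (b k) (personal_prices e p own k))"

lemma invariant_initial: "invariant (reserve_prices s V) (\<lambda>_. None)"
proof -
  have "\<exists>D\<in>demand (b k) (personal_prices e (reserve_prices s V) (\<lambda>_. None) k).
          assigned (\<lambda>_. None) k \<le> D" for k
    by (metis demand_nonempty assigned_def le_funI zero_le option.distinct(1))
  then show ?thesis by (simp add: invariant_def reserve_prices_def V_nonneg)
qed

lemma sum_prices_le: "invariant p own \<Longrightarrow> sum p UNIV \<le> real (card (UNIV :: 'm set)) * V"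
  using sum_mono[of UNIV p "\<lambda>_. V"] by (simp add: invariant_def)

context
  fixes p own k D
  assumes inv: "invariant p own" and k: "k \<in> K"
    and D: "D \<in> demand (b k) (personal_prices e p own k)" and kept: "assigned own k \<le> D"
begin

lemma binary_bid: "binary D"
  using D by (simp add: demand_iff)

lemma bid_affordable: "D j = 1 \<Longrightarrow> personal_prices e p own k j \<le> V"
  using demand_excludes_expensive[OF valuation[OF k] _ D, of V j] bounded[OF k] by fastforce

lemma bid_keeps_holdings:
  assumes "own j = Some k"
  shows "D j = 1"
proof -
  have "assigned own k j \<le> D j" using kept by (simp add: le_fun_def)
  then show ?thesis using assms binary_01[OF binary_bid, of j] by (simp add: assigned_def)
qed

lemma bid_in_supply:
  assumes "D j = 1"
  shows "s j = 1"
proof (rule ccontr)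
  assume "s j \<noteq> 1"
  then have "own j = None" using inv by (cases "own j") (auto simp: invariant_def)
  then have "personal_prices e p own k j = V + e"
    using inv \<open>s j \<noteq> 1\<close> by (simp add: invariant_def personal_prices_def reserve_prices_def)
  then show False using bid_affordable[OF assms] e_pos by simp
qed

lemma personal_prices_after_bid:
  "personal_prices e (raise_prices e p own k D) (outbid own k D) k = personal_prices e p own k"
  using bid_keeps_holdings by (auto simp: personal_prices_def raise_prices_def outbid_def)

lemma assigned_after_bid: "assigned (outbid own k D) k = D"
  using bid_keeps_holdings binary_01[OF binary_bid]
  by (fastforce simp: assigned_def outbid_def)

text \<open>Other bidders only see prices rise, and the prices of the items they keep stay put, so by
  gross substitutes they still demand a superset of their holdings.\<close>

lemma others_keep_demand:
  assumes l: "l \<in> K" "l \<noteq> k"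
  shows "\<exists>D'\<in>demand (b l) (personal_prices e (raise_prices e p own k D) (outbid own k D) l).
           assigned (outbid own k D) l \<le> D'"
proof -
  let ?p = "personal_prices e p own l"
    and ?q = "personal_prices e (raise_prices e p own k D) (outbid own k D) l"
  obtain Dl where Dl: "Dl \<in> demand (b l) ?p" and "assigned own l \<le> Dl"
    using inv l by (auto simp: invariant_def)
  have "?p \<le> ?q"
    using l e_pos by (auto simp: le_fun_def personal_prices_def raise_prices_def outbid_def)
  then obtain D' where D': "D' \<in> demand (b l) ?q" and ge: "\<forall>j\<in>{j. ?p j = ?q j}. Dl j \<le> D' j"
    using gross_substitutes[OF l(1)] Dl unfolding gross_substitutes_def by blast
  have "assigned (outbid own k D) l j \<le> D' j" for j
  proof (cases "outbid own k D j = Some l")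
    case True
    then have "D j \<noteq> 1" "own j = Some l" using l by (auto simp: outbid_def split: if_splits)
    then have "Dl j \<le> D' j"
      using ge by (simp add: personal_prices_def raise_prices_def outbid_def)
    moreover have "assigned own l j \<le> Dl j" using \<open>assigned own l \<le> Dl\<close> by (simp add: le_fun_def)
    ultimately show ?thesis using True \<open>own j = Some l\<close> by (simp add: assigned_def)
  qed (simp add: assigned_def)
  then show ?thesis using D' by (auto simp: le_fun_def)
qed

lemma invariant_after_bid: "invariant (raise_prices e p own k D) (outbid own k D)"
proof -
  have "raise_prices e p own k D j \<le> V" if "D j = 1" "own j \<noteq> Some k" for j
    using bid_affordable[OF that(1)] that by (simp add: raise_prices_def personal_prices_def)
  moreover have "\<exists>D'\<in>demand (b l) (personal_prices e (raise_prices e p own k D) (outbid own k D) l).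
                   assigned (outbid own k D) l \<le> D'" if "l \<in> K" for l
    using that others_keep_demand D personal_prices_after_bid assigned_after_bid
    by (cases "l = k") auto
  ultimately show ?thesis
    using inv k bid_in_supply e_pos
    by (fastforce simp: invariant_def raise_prices_def outbid_def)
qed

lemma prices_rise_after_bid:
  assumes "D \<noteq> assigned own k"
  shows "sum p UNIV + e \<le> sum (raise_prices e p own k D) UNIV"
proof -
  obtain j where j: "D j = 1" "own j \<noteq> Some k"
    using assms bid_keeps_holdings binary_01[OF binary_bid]
    by (fastforce simp: assigned_def)
  have "e \<le> (\<Sum>i\<in>UNIV. raise_prices e p own k D i - p i)"
    using j e_pos
    by (intro order.trans[OF _ member_le_sum[of j]]) (auto simp: raise_prices_def)
  then show ?thesis by (simp add: sum_subtractf)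
qed

end

lemma auction_step:
  assumes "invariant p own" "\<not> terminated p own"
  obtains p' own' where "invariant p' own'" "sum p UNIV + e \<le> sum p' UNIV"
proof -
  obtain k where k: "k \<in> K" and not_dem: "assigned own k \<notin> demand (b k) (personal_prices e p own k)"
    using assms(2) by (auto simp: terminated_def)
  obtain D where D: "D \<in> demand (b k) (personal_prices e p own k)" "assigned own k \<le> D"
    using assms(1) k by (auto simp: invariant_def)
  have "D \<noteq> assigned own k" using D not_dem by blast
  then show ?thesis
    using that invariant_after_bid[OF assms(1) k D] prices_rise_after_bid[OF assms(1) k D]
    by blast
qed

lemma auction_terminates:
  assumes "invariant p own"
  obtains p' own' where "invariant p' own'" "terminated p' own'"
proof -
  have "\<exists>p' own'. invariant p' own' \<and> terminated p' own'"
    if "invariant p own" "real (card (UNIV :: 'm set)) * V - sum p UNIV < real N * e" for N p own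
    using that
  proof (induction N arbitrary: p own)
    case 0
    then show ?case using sum_prices_le by fastforce
  next
    case (Suc N)
    show ?case
    proof (cases "terminated p own")
      case False
      then obtain p' own' where "invariant p' own'" "sum p UNIV + e \<le> sum p' UNIV"
        using auction_step Suc.prems(1) by blast
      then show ?thesis using Suc by (intro Suc.IH) (auto simp: algebra_simps)
    qed (use Suc.prems in blast)
  qed
  moreover obtain N where "real (card (UNIV :: 'm set)) * V - sum p UNIV < real N * e"
    using ex_less_of_nat_mult[OF e_pos] by blast
  ultimately show ?thesis using assms that by blast
qed

lemma indirect_utility_le_assigned:
  assumes "terminated p own" "k \<in> K"
  shows "indirect_utility (b k) p
           \<le> b k (assigned own k) - cost p (assigned own k) + real (card (UNIV :: 'm set)) * e"
proof -
  let ?\<pi> = "personal_prices e p own k"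
  obtain z where z: "binary z" "indirect_utility (b k) p = utility (b k) p z"
    by (rule indirect_utility_attained)
  have "utility (b k) ?\<pi> z \<le> utility (b k) ?\<pi> (assigned own k)"
    using assms z(1) by (simp add: terminated_def demand_iff)
  then show ?thesis
    using z(2) cost_personal_prices_le[OF z(1) less_imp_le[OF e_pos], of p own k]
    unfolding utility_def cost_personal_prices_assigned by linarith
qed

text \<open>At termination every bidder demands its holdings up to an error \<open>e\<close> per item, so the
  auction prices solve the dual of the welfare LP up to \<open>|K| |UNIV| e\<close>.\<close>

lemma approx_dual_prices:
  assumes "finite K" and "binary s"
  obtains p where "\<forall>j. 0 \<le> p j"
    "(\<Sum>k\<in>K. indirect_utility (b k) p) + cost p s
       \<le> welfare b K s + real (card K) * real (card (UNIV :: 'm set)) * e"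
proof -
  obtain p own where inv: "invariant p own" and stable: "terminated p own"
    using auction_terminates[OF invariant_initial] .
  have owners: "\<forall>j k. own j = Some k \<longrightarrow> k \<in> K" using inv by (simp add: invariant_def)
  have "(\<Sum>k\<in>K. indirect_utility (b k) p)
      \<le> (\<Sum>k\<in>K. b k (assigned own k) - cost p (assigned own k) + real (card (UNIV :: 'm set)) * e)"
    by (intro sum_mono indirect_utility_le_assigned[OF stable])
  also have "\<dots> = (\<Sum>k\<in>K. b k (assigned own k)) - cost p (\<lambda>j. \<Sum>k\<in>K. assigned own k j)
                  + real (card K) * real (card (UNIV :: 'm set)) * e"
    by (simp add: sum.distrib sum_subtractf cost_sum)
  also have "cost p (\<lambda>j. \<Sum>k\<in>K. assigned own k j) = cost p s"
    unfolding cost_def sum_assigned[OF assms(1) owners]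
  proof (rule sum.cong)
    fix j
    show "p j * real (if own j = None then 0 else 1) = p j * real (s j)"
      using inv binary_01[OF assms(2), of j]
      by (auto simp: invariant_def reserve_prices_def split: option.split)
  qed simp
  also have "(\<Sum>k\<in>K. b k (assigned own k)) \<le> welfare b K s"
    using assms sum_assigned[OF assms(1) owners] inv
    by (intro welfare_ge) (auto simp: invariant_def split: option.split)
  finally have "(\<Sum>k\<in>K. indirect_utility (b k) p) + cost p s
      \<le> welfare b K s + real (card K) * real (card (UNIV :: 'm set)) * e"
    by simp
  moreover have "\<forall>j. 0 \<le> p j" using inv by (simp add: invariant_def)
  ultimately show ?thesis by (rule that[rotated])
qed

end

lemma welfare_submodular:
  fixes b :: "nat \<Rightarrow> ('m::finite \<Rightarrow> nat) \<Rightarrow> real"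
  assumes K: "finite K" and val: "\<forall>k\<in>K. valuation (b k)" and gs: "\<forall>k\<in>K. gross_substitutes (b k)"
    and s: "binary s" and t: "binary t"
  shows "welfare b K (\<lambda>j. max (s j) (t j)) + welfare b K (\<lambda>j. min (s j) (t j))
           \<le> welfare b K s + welfare b K t"
proof (rule field_le_epsilon)
  fix d :: real assume "0 < d"
  define V where "V = (\<Sum>k\<in>K. b k one_vec)"
  define c where "c = real (card K) * real (card (UNIV :: 'm set))"
  define e where "e = d / (2 * c + 1)"
  have "0 \<le> c" by (simp add: c_def)
  then have e: "0 < e" "2 * c * e \<le> d"
    using \<open>0 < d\<close> by (simp_all add: e_def field_simps)
  have one_nonneg: "0 \<le> b k one_vec" if "k \<in> K" for k
    using val that by (simp add: valuation_nonneg)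
  have "0 \<le> V" unfolding V_def by (intro sum_nonneg one_nonneg)
  have bounded: "b k z \<le> V" if "k \<in> K" "binary z" for k z
  proof -
    have "b k z \<le> b k one_vec" using val that by (simp add: valuation_le_one)
    also have "\<dots> \<le> V" unfolding V_def by (rule member_le_sum[OF that(1) _ K]) (simp add: one_nonneg)
    finally show ?thesis .
  qed
  interpret S: ascending_auction b K s V e
    using val gs bounded \<open>0 \<le> V\<close> e(1) by unfold_locales auto
  interpret T: ascending_auction b K t V e
    using val gs bounded \<open>0 \<le> V\<close> e(1) by unfold_locales auto
  obtain p where p: "\<forall>j. 0 \<le> p j"
    "(\<Sum>k\<in>K. indirect_utility (b k) p) + cost p s \<le> welfare b K s + c * e"
    using S.approx_dual_prices[OF K s] by (auto simp: c_def)
  obtain q where q: "\<forall>j. 0 \<le> q j"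
    "(\<Sum>k\<in>K. indirect_utility (b k) q) + cost q t \<le> welfare b K t + c * e"
    using T.approx_dual_prices[OF K t] by (auto simp: c_def)
  let ?lo = "\<lambda>j. min (p j) (q j)" and ?hi = "\<lambda>j. max (p j) (q j)"
  have "welfare b K (\<lambda>j. max (s j) (t j))
          \<le> (\<Sum>k\<in>K. indirect_utility (b k) ?lo) + cost ?lo (\<lambda>j. max (s j) (t j))"
    using K p(1) q(1) by (intro welfare_le_dual) auto
  moreover have "welfare b K (\<lambda>j. min (s j) (t j))
          \<le> (\<Sum>k\<in>K. indirect_utility (b k) ?hi) + cost ?hi (\<lambda>j. min (s j) (t j))"
    using K p(1) by (intro welfare_le_dual) (auto simp: le_max_iff_disj)
  moreover have "(\<Sum>k\<in>K. indirect_utility (b k) ?lo) + (\<Sum>k\<in>K. indirect_utility (b k) ?hi)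
          \<le> (\<Sum>k\<in>K. indirect_utility (b k) p) + (\<Sum>k\<in>K. indirect_utility (b k) q)"
    unfolding sum.distrib[symmetric] using gs by (intro sum_mono indirect_utility_submodular) auto
  moreover have "cost ?lo (\<lambda>j. max (s j) (t j)) + cost ?hi (\<lambda>j. min (s j) (t j))
          \<le> cost p s + cost q t"
    using p(1) q(1) s t by (rule cost_min_max_le)
  ultimately show "welfare b K (\<lambda>j. max (s j) (t j)) + welfare b K (\<lambda>j. min (s j) (t j))
      \<le> welfare b K s + welfare b K t + d"
    using p(2) q(2) e(2) by linarith
qed

section \<open>Adding a bidder raises marginal values\<close>

lemma welfare_insert_ge:
  assumes "finite K" "i \<notin> K" "binary z" "\<forall>j. z j \<le> x j"
  shows "b i z + welfare b K (\<lambda>j. x j - z j) \<le> welfare b (insert i K) x"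
proof -
  obtain y where y: "\<forall>k\<in>K. binary (y k)" "\<forall>j. (\<Sum>k\<in>K. y k j) \<le> x j - z j"
    and opt: "welfare b K (\<lambda>j. x j - z j) = (\<Sum>k\<in>K. b k (y k))"
    using welfare_attained[OF assms(1)] .
  have sums: "(\<Sum>k\<in>K. f k ((y(i := z)) k)) = (\<Sum>k\<in>K. f k (y k))"
    for f :: "_ \<Rightarrow> _ \<Rightarrow> 'c::comm_monoid_add"
    using assms(2) by (intro sum.cong) auto
  have "(\<Sum>k\<in>insert i K. b k ((y(i := z)) k)) \<le> welfare b (insert i K) x"
  proof (rule welfare_ge)
    show "\<forall>j. (\<Sum>k\<in>insert i K. (y(i := z)) k j) \<le> x j"
      using assms y(2) sums[of "\<lambda>_ w. w _"] by (simp add: le_diff_conv2 add.commute)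
  qed (use assms y(1) in auto)
  then show ?thesis using assms(1,2) sums[of b] by (simp add: opt)
qed

lemma welfare_insert_le:
  assumes "finite K" "i \<notin> K"
  obtains z where "binary z" "\<forall>j. z j \<le> x j"
    "welfare b (insert i K) x \<le> b i z + welfare b K (\<lambda>j. x j - z j)"
proof -
  obtain y where y: "\<forall>k\<in>insert i K. binary (y k)" "\<forall>j. (\<Sum>k\<in>insert i K. y k j) \<le> x j"
    and opt: "welfare b (insert i K) x = (\<Sum>k\<in>insert i K. b k (y k))"
    using welfare_attained[of "insert i K"] assms(1) by blast
  have split: "y i j + (\<Sum>k\<in>K. y k j) \<le> x j" for j
    using y(2) assms by simp
  have "(\<Sum>k\<in>K. b k (y k)) \<le> welfare b K (\<lambda>j. x j - y i j)"
  proof (rule welfare_ge)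
    show "\<forall>j. (\<Sum>k\<in>K. y k j) \<le> x j - y i j"
      using split by (metis add_diff_cancel_left' diff_le_mono)
  qed (use assms y(1) in auto)
  moreover have "y i j \<le> x j" for j
    using split[of j] by simp
  ultimately show ?thesis using that[of "y i"] y(1) opt assms by simp
qed

text \<open>Let \<open>z\<close> be bidder \<open>i\<close>'s bundle in an optimal allocation of \<open>c\<close>. Then
  \<open>W\<^sub>K\<^sub>+\<^sub>i(1) - W\<^sub>K\<^sub>+\<^sub>i(c) \<ge> W\<^sub>K(1 - z) - W\<^sub>K(c - z) \<ge> W\<^sub>K(1) - W\<^sub>K(c)\<close>, the last step by
  submodularity of \<open>W\<^sub>K\<close> applied to \<open>1 - z\<close> and \<open>c\<close>.\<close>

lemma welfare_marginal_insert_ge: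
  assumes K: "finite K" "i \<notin> K"
    and val: "\<forall>k\<in>K. valuation (b k)" and gs: "\<forall>k\<in>K. gross_substitutes (b k)" and c: "binary c"
  shows "welfare b K one_vec - welfare b K c
           \<le> welfare b (insert i K) one_vec - welfare b (insert i K) c"
proof -
  obtain z where z: "binary z" "\<forall>j. z j \<le> c j"
    and Wc: "welfare b (insert i K) c \<le> b i z + welfare b K (\<lambda>j. c j - z j)"
    using welfare_insert_le[OF K] .
  have W1: "b i z + welfare b K (\<lambda>j. one_vec j - z j) \<le> welfare b (insert i K) one_vec"
    using K z(1) by (rule welfare_insert_ge) (use z(1) in \<open>simp add: binary_def one_vec_def\<close>)
  have "binary (\<lambda>j. one_vec j - z j)" by (simp add: binary_def one_vec_def)
  then have "welfare b K (\<lambda>j. max (one_vec j - z j) (c j))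
        + welfare b K (\<lambda>j. min (one_vec j - z j) (c j))
      \<le> welfare b K (\<lambda>j. one_vec j - z j) + welfare b K c"
    using K(1) val gs c by (intro welfare_submodular)
  moreover have "max (one_vec j - z j) (c j) = one_vec j \<and> min (one_vec j - z j) (c j) = c j - z j"
    for j using z(2)[rule_format, of j] binary_01[OF z(1), of j] binary_01[OF c, of j]
    by (auto simp: one_vec_def)
  then have "(\<lambda>j. max (one_vec j - z j) (c j)) = one_vec"
    and "(\<lambda>j. min (one_vec j - z j) (c j)) = (\<lambda>j. c j - z j)"
    by (simp_all add: fun_eq_iff)
  ultimately show ?thesis using Wc W1 by simp
qed

lemma welfare_complement_le_prefix:
  fixes b :: "nat \<Rightarrow> ('m::finite \<Rightarrow> nat) \<Rightarrow> real" and xs :: "nat \<Rightarrow> 'm \<Rightarrow> nat"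
  assumes val: "\<forall>i<n. valuation (b i)" and gs: "\<forall>i<n. gross_substitutes (b i)"
    and bin: "\<forall>i<n. binary (xs i)" and part: "\<forall>j. (\<Sum>i<n. xs i j) = one_vec j" and "i < n"
  defines "S \<equiv> \<lambda>i j. \<Sum>k<i. xs k j"
  shows "welfare b {..<n} one_vec - welfare b {..<n} (\<lambda>j. one_vec j - xs i j)
           \<le> welfare b {..<n} (S (Suc i)) - welfare b {..<n} (S i)"
proof -
  have S_le: "S (Suc i) j \<le> 1" for j
    using sum_mono2[of "{..<n}" "{..<Suc i}" "\<lambda>k. xs k j"] \<open>i < n\<close> part
    by (simp add: S_def one_vec_def)
  have S_Suc: "S (Suc i) j = S i j + xs i j" for j by (simp add: S_def)
  have "binary (S (Suc i))" "binary (\<lambda>j. one_vec j - xs i j)"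
    using S_le by (simp_all add: binary_def one_vec_def)
  then have "welfare b {..<n} (\<lambda>j. max (S (Suc i) j) (one_vec j - xs i j))
        + welfare b {..<n} (\<lambda>j. min (S (Suc i) j) (one_vec j - xs i j))
      \<le> welfare b {..<n} (S (Suc i)) + welfare b {..<n} (\<lambda>j. one_vec j - xs i j)"
    using val gs by (intro welfare_submodular) auto
  moreover have "max (S (Suc i) j) (one_vec j - xs i j) = one_vec j
      \<and> min (S (Suc i) j) (one_vec j - xs i j) = S i j" for j
    using S_le[of j] S_Suc[of j] binary_01[of "xs i" j] bin \<open>i < n\<close> by (auto simp: one_vec_def)
  then have "(\<lambda>j. max (S (Suc i) j) (one_vec j - xs i j)) = one_vec"
    and "(\<lambda>j. min (S (Suc i) j) (one_vec j - xs i j)) = S i"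
    by (simp_all add: fun_eq_iff)
  ultimately show ?thesis by simp
qed

theorem lemma2:
  fixes b :: "nat \<Rightarrow> ('m::finite \<Rightarrow> nat) \<Rightarrow> real"
    and xs :: "nat \<Rightarrow> 'm \<Rightarrow> nat"
    and n :: nat
  assumes val: "\<forall>i<n. valuation (b i)"
    and gs: "\<forall>i<n. gross_substitutes (b i)"
    and bin: "\<forall>i<n. binary (xs i)"
    and part: "\<forall>j. (\<Sum>i<n. xs i j) = one_vec j"
  shows "(\<Sum>i<n. marginal (welfare b ({..<n} - {i})) (xs i) (\<lambda>j. one_vec j - xs i j))
           \<le> welfare b {..<n} one_vec"
proof -
  let ?W = "welfare b {..<n}" and ?S = "\<lambda>i j. \<Sum>k<i. xs k j"
  have "marginal (welfare b ({..<n} - {i})) (xs i) (\<lambda>j. one_vec j - xs i j)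
          \<le> ?W (?S (Suc i)) - ?W (?S i)" if "i < n" for i
  proof -
    have "(\<lambda>j. xs i j + (one_vec j - xs i j)) = one_vec"
      using bin that by (auto simp: fun_eq_iff binary_def one_vec_def)
    moreover have "insert i ({..<n} - {i}) = {..<n}" using that by auto
    ultimately show ?thesis
      using welfare_marginal_insert_ge[of "{..<n} - {i}" i b "\<lambda>j. one_vec j - xs i j"]
        welfare_complement_le_prefix[OF val gs bin part that] val gs
      by (simp add: marginal_def binary_def one_vec_def)
  qed
  then have "(\<Sum>i<n. marginal (welfare b ({..<n} - {i})) (xs i) (\<lambda>j. one_vec j - xs i j))
      \<le> (\<Sum>i<n. ?W (?S (Suc i)) - ?W (?S i))"
    by (intro sum_mono) simp
  also have "\<dots> = ?W (?S n) - ?W (?S 0)" by (rule sum_lessThan_telescope)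
  also have "\<dots> \<le> ?W one_vec"
    using part val welfare_nonneg[of "{..<n}" b "?S 0"] by (simp add: fun_eq_iff)
  finally show ?thesis .
qed

end
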